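(* Let $b\in\mathbb{R}\setminus\{0\}$ and let $\nu_1,\nu_2:\mathbb{R}^2\to\mathbb{R}$ be smooth functions of $(j,t)$ with $\nu_2(0,0)=0$ and $$\nu_1(0,0)=0,\qquad \frac{\partial \nu_1}{\partial j}(0,0)=0,\qquad \frac{\partial^2 \nu_1}{\partial j^2}(0,0)\neq 0,\qquad \frac{\partial \nu_1}{\partial t}(0,0)\neq 0.$$ Define $\mathrm{disc}_b(j,t):=\nu_2(j,t)^2-4b\,\nu_1(j,t)$. Then the saddle-node bifurcations associated to $\nu_1$ and $\mathrm{disc}_b$ are concave in the same direction if $$\frac{1}{2b}\,\frac{\left(\frac{\partial \nu_2}{\partial j}(0,0)\right)^2}{\frac{\partial^2 \nu_1}{\partial j^2}(0,0)}<1 .$$ If the inequality is reversed, they are concave in opposite directions. If equality holds, the double flip bifurcation is degenerate, i.e. $\frac{\partial^2 \mathrm{disc}_b}{\partial j^2}(0,0)=0$.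
   Context: For a smooth function $g(j,t)$ with $g(0,0)=0$, $\partial_j g(0,0)=0$, $\partial_j^2 g(0,0)\neq 0$, $\partial_t g(0,0)\neq 0$ (the conditions for the ODE $dj/dt=g(j,t)$ to undergo a saddle-node bifurcation at the origin), the zero set $\{g=0\}$ near the origin is a curve $t=\gamma(j)$ of parabolic shape with $\gamma(0)=\gamma'(0)=0$; the associated saddle-node bifurcation is called concave up if $\partial_j^2 g(0,0)\,\partial_t g(0,0)<0$ and concave down if $\partial_j^2 g(0,0)\,\partial_t g(0,0)>0$. One has $\partial_j \mathrm{disc}_b(0,0)=0$ and $\partial_t\mathrm{disc}_b(0,0)=-4b\,\partial_t\nu_1(0,0)\neq0$, so $\mathrm{disc}_b$ satisfies the saddle-node conditions exactly when $\partial_j^2\mathrm{disc}_b(0,0)=2(\partial_j\nu_2(0,0))^2-4b\,\partial_j^2\nu_1(0,0)\neq0$; the double flip bifurcation (of the Hamiltonian $H_{j,t}(q,p)=\frac{a}{2}p^2+\frac{b}{6}q^6+\frac{\nu_1(j,t)}{2}q^2+\frac{\nu_2(j,t)}{4}q^4$) is called non-degenerate if this quantity is non-zero and degenerate otherwise. *)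

theory Defs
  imports "HOL-Analysis.Analysis"
begin

definition pd_j :: "(real \<times> real \<Rightarrow> real) \<Rightarrow> real \<times> real \<Rightarrow> real" where
  "pd_j f = (\<lambda>(j, t). deriv (\<lambda>s. f (s, t)) j)"

definition pd_t :: "(real \<times> real \<Rightarrow> real) \<Rightarrow> real \<times> real \<Rightarrow> real" where
  "pd_t f = (\<lambda>(j, t). deriv (\<lambda>s. f (j, s)) t)"

fun iter_pd :: "bool list \<Rightarrow> (real \<times> real \<Rightarrow> real) \<Rightarrow> real \<times> real \<Rightarrow> real" where
  "iter_pd [] f = f"
| "iter_pd (d # ds) f = (if d then pd_j else pd_t) (iter_pd ds f)"

definition smooth2 :: "(real \<times> real \<Rightarrow> real) \<Rightarrow> bool" where
  "smooth2 f \<longleftrightarrow> (\<forall>ds. continuous_on UNIV (iter_pd ds f) \<and>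
     (\<forall>j t. (\<lambda>s. iter_pd ds f (s, t)) differentiable (at j) \<and>
            (\<lambda>s. iter_pd ds f (j, s)) differentiable (at t)))"

text \<open>Saddle-node conditions for dj/dt = g(j,t) at the origin.\<close>
definition saddle_node :: "(real \<times> real \<Rightarrow> real) \<Rightarrow> bool" where
  "saddle_node g \<longleftrightarrow> g (0, 0) = 0 \<and> pd_j g (0, 0) = 0 \<and>
     pd_j (pd_j g) (0, 0) \<noteq> 0 \<and> pd_t g (0, 0) \<noteq> 0"

definition concave_up :: "(real \<times> real \<Rightarrow> real) \<Rightarrow> bool" where
  "concave_up g \<longleftrightarrow> saddle_node g \<and> pd_j (pd_j g) (0, 0) * pd_t g (0, 0) < 0"

definition concave_down :: "(real \<times> real \<Rightarrow> real) \<Rightarrow> bool" where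
  "concave_down g \<longleftrightarrow> saddle_node g \<and> pd_j (pd_j g) (0, 0) * pd_t g (0, 0) > 0"

definition disc :: "real \<Rightarrow> (real \<times> real \<Rightarrow> real) \<Rightarrow> (real \<times> real \<Rightarrow> real) \<Rightarrow> real \<times> real \<Rightarrow> real" where
  "disc b \<nu>1 \<nu>2 = (\<lambda>x. (\<nu>2 x)\<^sup>2 - 4 * b * \<nu>1 x)"

definition same_concavity :: "(real \<times> real \<Rightarrow> real) \<Rightarrow> (real \<times> real \<Rightarrow> real) \<Rightarrow> bool" where
  "same_concavity f g \<longleftrightarrow> (concave_up f \<and> concave_up g) \<or> (concave_down f \<and> concave_down g)"

definition opposite_concavity :: "(real \<times> real \<Rightarrow> real) \<Rightarrow> (real \<times> real \<Rightarrow> real) \<Rightarrow> bool" where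
  "opposite_concavity f g \<longleftrightarrow> (concave_up f \<and> concave_down g) \<or> (concave_down f \<and> concave_up g)"

end

theory Submission
  imports Defs
begin

text \<open>Since \<open>\<nu>\<^sub>2(0,0) = 0\<close>, the chain rule gives at the origin \<open>\<partial>\<^sub>t disc\<^sub>b = -4b \<partial>\<^sub>t\<nu>\<^sub>1\<close> and
  \<open>\<partial>\<^sub>j\<^sup>2 disc\<^sub>b = 2(\<partial>\<^sub>j\<nu>\<^sub>2)\<^sup>2 - 4b \<partial>\<^sub>j\<^sup>2\<nu>\<^sub>1 = 4b \<partial>\<^sub>j\<^sup>2\<nu>\<^sub>1 (r - 1)\<close>, where \<open>r\<close> is the ratio in the
  statement. Hence the concavity indicator \<open>\<partial>\<^sub>j\<^sup>2 g \<partial>\<^sub>t g\<close> of \<open>disc\<^sub>b\<close> is \<open>16b\<^sup>2(1 - r)\<close> times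
  that of \<open>\<nu>\<^sub>1\<close>, and the sign of \<open>1 - r\<close> decides whether the concavities agree.\<close>

lemma iter_pd_append: "iter_pd (ds @ es) f = iter_pd ds (iter_pd es f)"
  by (induction ds) auto

lemma smooth2_pd_j:
  assumes "smooth2 f"
  shows "smooth2 (pd_j f)"
proof -
  have "iter_pd ds (pd_j f) = iter_pd (ds @ [True]) f" for ds
    by (simp add: iter_pd_append)
  then show ?thesis using assms unfolding smooth2_def by metis
qed

lemma smooth2_has_pd_j:
  assumes "smooth2 f"
  shows "((\<lambda>s. f (s, t)) has_real_derivative pd_j f (j, t)) (at j)"
proof -
  have "(\<lambda>s. iter_pd [] f (s, t)) differentiable (at j)"
    using assms unfolding smooth2_def by blast
  then show ?thesis by (simp add: pd_j_def DERIV_deriv_iff_real_differentiable)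
qed

lemma smooth2_has_pd_t:
  assumes "smooth2 f"
  shows "((\<lambda>s. f (j, s)) has_real_derivative pd_t f (j, t)) (at t)"
proof -
  have "(\<lambda>s. iter_pd [] f (j, s)) differentiable (at t)"
    using assms unfolding smooth2_def by blast
  then show ?thesis by (simp add: pd_t_def DERIV_deriv_iff_real_differentiable)
qed

lemma pd_j_disc:
  assumes "smooth2 \<nu>1" "smooth2 \<nu>2"
  shows "pd_j (disc b \<nu>1 \<nu>2) = (\<lambda>x. 2 * \<nu>2 x * pd_j \<nu>2 x - 4 * b * pd_j \<nu>1 x)"
proof (rule ext, clarify)
  fix j t
  have "((\<lambda>s. (\<nu>2 (s, t))\<^sup>2 - 4 * b * \<nu>1 (s, t)) has_real_derivative
      2 * \<nu>2 (j, t) * pd_j \<nu>2 (j, t) - 4 * b * pd_j \<nu>1 (j, t)) (at j)"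
    using assms[THEN smooth2_has_pd_j, of t j] by (auto intro!: derivative_eq_intros)
  then show "pd_j (disc b \<nu>1 \<nu>2) (j, t) = 2 * \<nu>2 (j, t) * pd_j \<nu>2 (j, t) - 4 * b * pd_j \<nu>1 (j, t)"
    by (simp add: pd_j_def disc_def DERIV_imp_deriv)
qed

lemma pd_t_disc:
  assumes "smooth2 \<nu>1" "smooth2 \<nu>2"
  shows "pd_t (disc b \<nu>1 \<nu>2) (j, t) = 2 * \<nu>2 (j, t) * pd_t \<nu>2 (j, t) - 4 * b * pd_t \<nu>1 (j, t)"
proof -
  have "((\<lambda>s. (\<nu>2 (j, s))\<^sup>2 - 4 * b * \<nu>1 (j, s)) has_real_derivative
      2 * \<nu>2 (j, t) * pd_t \<nu>2 (j, t) - 4 * b * pd_t \<nu>1 (j, t)) (at t)"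
    using assms[THEN smooth2_has_pd_t, of j t] by (auto intro!: derivative_eq_intros)
  then show ?thesis by (simp add: pd_t_def disc_def DERIV_imp_deriv)
qed

lemma pd_j_pd_j_disc:
  assumes "smooth2 \<nu>1" "smooth2 \<nu>2"
  shows "pd_j (pd_j (disc b \<nu>1 \<nu>2)) (j, t) =
    2 * (pd_j \<nu>2 (j, t))\<^sup>2 + 2 * \<nu>2 (j, t) * pd_j (pd_j \<nu>2) (j, t) - 4 * b * pd_j (pd_j \<nu>1) (j, t)"
proof -
  have "((\<lambda>s. 2 * \<nu>2 (s, t) * pd_j \<nu>2 (s, t) - 4 * b * pd_j \<nu>1 (s, t)) has_real_derivative
      2 * (pd_j \<nu>2 (j, t))\<^sup>2 + 2 * \<nu>2 (j, t) * pd_j (pd_j \<nu>2) (j, t)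
        - 4 * b * pd_j (pd_j \<nu>1) (j, t)) (at j)"
    using smooth2_has_pd_j[OF assms(2), of t j]
      assms[THEN smooth2_pd_j, THEN smooth2_has_pd_j, of t j]
    by (auto intro!: derivative_eq_intros simp: power2_eq_square algebra_simps)
  then show ?thesis by (simp add: pd_j_disc[OF assms] pd_j_def[of "\<lambda>x. _ x - _ x"] DERIV_imp_deriv)
qed

lemma saddle_node_disc_iff:
  assumes "b \<noteq> 0" "smooth2 \<nu>1" "smooth2 \<nu>2" "\<nu>2 (0, 0) = 0" "saddle_node \<nu>1"
  shows "saddle_node (disc b \<nu>1 \<nu>2) \<longleftrightarrow> pd_j (pd_j (disc b \<nu>1 \<nu>2)) (0, 0) \<noteq> 0"
proof -
  have "disc b \<nu>1 \<nu>2 (0, 0) = 0"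
    using assms by (simp add: disc_def saddle_node_def)
  then show ?thesis
    using assms by (simp add: saddle_node_def pd_j_disc pd_t_disc)
qed

lemma same_concavity_of_pos_multiple:
  assumes "saddle_node f" "saddle_node g" "k > 0"
    and "pd_j (pd_j g) (0, 0) * pd_t g (0, 0) = k * (pd_j (pd_j f) (0, 0) * pd_t f (0, 0))"
  shows "same_concavity f g"
  using assms by (auto simp: same_concavity_def concave_up_def concave_down_def saddle_node_def
      mult_less_0_iff zero_less_mult_iff linorder_neq_iff)

lemma opposite_concavity_of_neg_multiple:
  assumes "saddle_node f" "saddle_node g" "k < 0"
    and "pd_j (pd_j g) (0, 0) * pd_t g (0, 0) = k * (pd_j (pd_j f) (0, 0) * pd_t f (0, 0))"
  shows "opposite_concavity f g"
  using assms by (auto simp: opposite_concavity_def concave_up_def concave_down_def saddle_node_def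
      mult_less_0_iff zero_less_mult_iff linorder_neq_iff)

theorem theorem4p2:
  fixes b :: real and \<nu>1 \<nu>2 :: "real \<times> real \<Rightarrow> real"
  assumes "b \<noteq> 0"
    and "smooth2 \<nu>1" and "smooth2 \<nu>2"
    and "\<nu>2 (0, 0) = 0"
    and "\<nu>1 (0, 0) = 0" and "pd_j \<nu>1 (0, 0) = 0"
    and "pd_j (pd_j \<nu>1) (0, 0) \<noteq> 0" and "pd_t \<nu>1 (0, 0) \<noteq> 0"
  shows "(1 / (2 * b) * ((pd_j \<nu>2 (0, 0))\<^sup>2 / pd_j (pd_j \<nu>1) (0, 0)) < 1
            \<longrightarrow> same_concavity \<nu>1 (disc b \<nu>1 \<nu>2))
       \<and> (1 / (2 * b) * ((pd_j \<nu>2 (0, 0))\<^sup>2 / pd_j (pd_j \<nu>1) (0, 0)) > 1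
            \<longrightarrow> opposite_concavity \<nu>1 (disc b \<nu>1 \<nu>2))
       \<and> (1 / (2 * b) * ((pd_j \<nu>2 (0, 0))\<^sup>2 / pd_j (pd_j \<nu>1) (0, 0)) = 1
            \<longrightarrow> pd_j (pd_j (disc b \<nu>1 \<nu>2)) (0, 0) = 0)"
proof -
  define D where "D = disc b \<nu>1 \<nu>2"
  define r where "r = 1 / (2 * b) * ((pd_j \<nu>2 (0, 0))\<^sup>2 / pd_j (pd_j \<nu>1) (0, 0))"
  have saddle_\<nu>1: "saddle_node \<nu>1"
    using assms by (simp add: saddle_node_def)
  have D_jj: "pd_j (pd_j D) (0, 0) = 4 * b * pd_j (pd_j \<nu>1) (0, 0) * (r - 1)"
    using assms by (simp add: D_def r_def pd_j_pd_j_disc field_simps)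
  have D_t: "pd_t D (0, 0) = - 4 * b * pd_t \<nu>1 (0, 0)"
    using assms by (simp add: D_def pd_t_disc)
  have indicator: "pd_j (pd_j D) (0, 0) * pd_t D (0, 0) =
      (16 * b\<^sup>2 * (1 - r)) * (pd_j (pd_j \<nu>1) (0, 0) * pd_t \<nu>1 (0, 0))"
    unfolding D_jj D_t by (simp add: power2_eq_square algebra_simps)
  have saddle_D: "saddle_node D" if "r \<noteq> 1"
    using saddle_node_disc_iff[OF assms(1-4) saddle_\<nu>1, folded D_def] D_jj that assms(1,7)
    by simp
  have "b\<^sup>2 > 0" using assms(1) by simp
  then have "r < 1 \<Longrightarrow> 16 * b\<^sup>2 * (1 - r) > 0" and "r > 1 \<Longrightarrow> 16 * b\<^sup>2 * (1 - r) < 0"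
    by (simp_all add: mult_pos_neg)
  then show ?thesis
    unfolding D_def[symmetric] r_def[symmetric]
    using same_concavity_of_pos_multiple[OF saddle_\<nu>1 saddle_D _ indicator]
      opposite_concavity_of_neg_multiple[OF saddle_\<nu>1 saddle_D _ indicator] D_jj
    by auto
qed

end
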